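(* Let $d\ge46$. The number of finite strictly increasing sequences of positive integers $h_1<\dots<h_k$ ($k\ge1$) satisfying $h_1\ge7$, $h_k=d+k+1$ and $h_{i+1}-h_i\ge6$ for all $i$ (equivalently, the number of $d$-dimensional lattices $L_d(h_1,\dots,h_k)$ satisfying these conditions) equals $\alpha(d-8)$.
   Context: For a strictly increasing sequence of positive integers $h_1<h_2<\dots$ and $d\ge1$, $L_d(h_1,h_2,\dots)=\{x\in\mathbb Z^{d+2}:\sum_ix_i=0,\ \sum_is_ix_i=0\}$ where $s_1<\dots<s_{d+2}$ are the $d+2$ smallest elements of $\{1,2,\dots\}\setminus\{h_1,h_2,\dots\}$. For $n\ge1$, $\alpha(n)$ is the number of strictly increasing integer sequences $s_1=1<s_2<\dots<s_n$ with $s_{i+1}-s_i\in\{1,2\}$ for all $i$ and such that whenever $1\le i<j\le n-1$ with $s_{i+1}-s_i=s_{j+1}-s_j=2$ one has $s_j-s_i\ge6$; it satisfies $\alpha(n)=n$ for $n\le6$ and $\alpha(n)=\alpha(n-1)+\alpha(n-5)$ for $n\ge6$. *)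

theory Defs
  imports Main
begin

definition alpha :: "nat \<Rightarrow> nat" where
  "alpha n = card {s :: nat list. length s = n \<and> s ! 0 = 1 \<and>
     (\<forall>i. Suc i < n \<longrightarrow> s ! Suc i - s ! i \<in> {1, 2}) \<and>
     (\<forall>i j. i < j \<and> Suc j < n \<and> s ! Suc i - s ! i = 2 \<and> s ! Suc j - s ! j = 2
        \<longrightarrow> s ! j - s ! i \<ge> 6)}"

definition admissible_seqs :: "nat \<Rightarrow> nat list set" where
  "admissible_seqs d = {hs. hs \<noteq> [] \<and> sorted_wrt (<) hs \<and> hd hs \<ge> 7 \<and>
     last hs = d + length hs + 1 \<and>
     (\<forall>i. Suc i < length hs \<longrightarrow> hs ! Suc i - hs ! i \<ge> 6)}"

end

theory Submission
  imports Defs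
begin

text \<open>Both sides count strictly increasing lists of naturals below some bound with consecutive
  gaps at least 5. An admissible sequence is determined by \<open>h\<^sub>1, \<dots>, h\<^sub>k\<^sub>-\<^sub>1\<close>, and
  \<open>x\<^sub>i = h\<^sub>i - i - 7\<close> turns gaps \<open>\<ge> 6\<close> into gaps \<open>\<ge> 5\<close> while \<open>h\<^sub>k = d + k + 1\<close> becomes the bound
  \<open>x\<^sub>i < d - 9\<close>. A sequence counted by \<open>\<alpha>(n)\<close> is determined by the positions of its steps of
  size 2, and since \<open>s\<^sub>j - s\<^sub>i\<close> is \<open>j - i\<close> plus the number of such positions in \<open>[i, j)\<close>, the
  condition \<open>s\<^sub>j - s\<^sub>i \<ge> 6\<close> says exactly that consecutive positions are at distance at least 5.\<close>

lemma transp_le_add: "transp (\<lambda>x y :: nat. x + c \<le> y)"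
  by (auto intro: transpI)

lemma sorted_wrt_le_add_nth:
  assumes sorted: "sorted_wrt (\<lambda>x y :: nat. x + c \<le> y) xs" and "i \<le> j" "j < length xs"
  shows "xs!i + c * (j - i) \<le> xs!j"
  using assms(2,3)
proof (induction j rule: dec_induct)
  case base
  then show ?case by simp
next
  case (step j)
  then have "xs!i + c * (j - i) \<le> xs!j" "xs!j + c \<le> xs!Suc j"
    using sorted by (auto simp: sorted_wrt_iff_nth_Suc_transp[OF transp_le_add])
  moreover have "c * (Suc j - i) = c * (j - i) + c"
    using step(1) by (simp add: Suc_diff_le)
  ultimately show ?case by linarith
qed

lemma sorted_wrt_le_add_shift:
  "sorted_wrt (\<lambda>x y :: nat. x + Suc c \<le> y) (map (\<lambda>i. xs!i + i + a) [0..<length xs])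
     \<longleftrightarrow> sorted_wrt (\<lambda>x y. x + c \<le> y) xs"
  unfolding sorted_wrt_iff_nth_Suc_transp[OF transp_le_add] by simp

lemma card_less_split:
  fixes X :: "'a :: linorder set"
  assumes "finite X" "i \<le> j"
  shows "card {x\<in>X. x < j} = card {x\<in>X. x < i} + card {x\<in>X. i \<le> x \<and> x < j}"
proof -
  have "{x\<in>X. x < j} = {x\<in>X. x < i} \<union> {x\<in>X. i \<le> x \<and> x < j}"
    using assms(2) by auto
  moreover have "card ({x\<in>X. x < i} \<union> {x\<in>X. i \<le> x \<and> x < j})
      = card {x\<in>X. x < i} + card {x\<in>X. i \<le> x \<and> x < j}"
    using assms(1) by (intro card_Un_disjoint) auto
  ultimately show ?thesis by simp
qed

lemma card_less_Suc:
  assumes "finite X"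
  shows "card {x\<in>X. x < Suc i} = card {x\<in>X. x < i} + (if i \<in> X then 1 else 0)"
proof -
  have "{x\<in>X. i \<le> x \<and> x < Suc i} = (if i \<in> X then {i} else {})"
    using le_antisym less_Suc_eq_le by auto
  then show ?thesis
    using card_less_split[OF assms, of i "Suc i"] by simp
qed

lemma sorted_wrt_less_nth_less_iff:
  fixes xs :: "'a :: linorder list"
  assumes "sorted_wrt (<) xs" "i < length xs" "j < length xs"
  shows "xs!i < xs!j \<longleftrightarrow> i < j"
  using sorted_wrt_nth_less[OF assms(1)] assms(2,3)
  by (cases i j rule: linorder_cases) (auto dest: order.asym)

lemma sorted_wrt_less_consecutive:
  fixes xs :: "'a :: linorder list"
  assumes strict: "sorted_wrt (<) xs" and p: "Suc p < length xs"
  shows "{x \<in> set xs. xs!p \<le> x \<and> x < xs!Suc p} = {xs!p}"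
proof -
  have "q = p" if "q < length xs" "xs!p \<le> xs!q" "xs!q < xs!Suc p" for q
    using that p sorted_wrt_less_nth_less_iff[OF strict] by (metis Suc_lessD leD less_antisym)
  moreover have "xs!p \<in> set xs" "xs!p < xs!Suc p"
    using p strict by (auto simp: sorted_wrt_nth_less)
  ultimately show ?thesis
    by (auto simp: in_set_conv_nth)
qed

definition separated_lists :: "nat \<Rightarrow> nat list set" where
  "separated_lists m = {xs. sorted_wrt (\<lambda>x y. x + 5 \<le> y) xs \<and> set xs \<subseteq> {..<m}}"

lemma admissible_seqs_iff:
  "hs \<in> admissible_seqs d \<longleftrightarrow>
     hs \<noteq> [] \<and> sorted_wrt (\<lambda>x y. x + 6 \<le> y) hs \<and> hd hs \<ge> 7 \<and> last hs = d + length hs + 1"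
proof -
  have "sorted_wrt (<) hs \<and> (\<forall>i. Suc i < length hs \<longrightarrow> hs!Suc i - hs!i \<ge> 6)
      \<longleftrightarrow> sorted_wrt (\<lambda>x y. x + 6 \<le> y) hs"
    by (auto simp: sorted_wrt_iff_nth_Suc_transp[OF transp_le_add]
        sorted_wrt_iff_nth_Suc_transp[of "(<)"])
  then show ?thesis
    unfolding admissible_seqs_def by blast
qed

definition admissible_seq_of :: "nat \<Rightarrow> nat list \<Rightarrow> nat list" where
  "admissible_seq_of d xs = map (\<lambda>i. xs!i + i + 7) [0..<length xs] @ [d + length xs + 2]"

definition separated_list_of :: "nat list \<Rightarrow> nat list" where
  "separated_list_of hs = map (\<lambda>i. hs!i - i - 7) [0..<length hs - 1]"

lemma admissible_seq_of_mem_iff: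
  assumes "d \<ge> 9"
  shows "admissible_seq_of d xs \<in> admissible_seqs d \<longleftrightarrow> xs \<in> separated_lists (d - 9)"
proof -
  let ?k = "length xs"
  have bound_iff: "(\<forall>i < ?k. xs!i + i + 13 \<le> d + ?k + 2) \<longleftrightarrow> set xs \<subseteq> {..<d - 9}"
    if sorted: "sorted_wrt (\<lambda>x y. x + 5 \<le> y) xs"
  proof
    assume last_bound: "\<forall>i < ?k. xs!i + i + 13 \<le> d + ?k + 2"
    show "set xs \<subseteq> {..<d - 9}"
    proof
      fix x assume "x \<in> set xs"
      then obtain i where i: "i < ?k" "x = xs!i" by (auto simp: in_set_conv_nth)
      have "xs!i + 5 * (?k - 1 - i) \<le> xs!(?k - 1)"
        using i by (intro sorted_wrt_le_add_nth[OF sorted]) auto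
      moreover have "xs!(?k - 1) + (?k - 1) + 13 \<le> d + ?k + 2"
        using last_bound[rule_format, of "?k - 1"] i by simp
      ultimately show "x \<in> {..<d - 9}" using i by simp
    qed
  next
    assume "set xs \<subseteq> {..<d - 9}"
    then have "xs!i < d - 9" if "i < ?k" for i
      using that nth_mem by blast
    then show "\<forall>i < ?k. xs!i + i + 13 \<le> d + ?k + 2"
      using assms by fastforce
  qed
  have "sorted_wrt (\<lambda>x y. x + 6 \<le> y) (admissible_seq_of d xs) \<longleftrightarrow>
      sorted_wrt (\<lambda>x y. x + 5 \<le> y) xs \<and> (\<forall>i < ?k. xs!i + i + 13 \<le> d + ?k + 2)"
    using sorted_wrt_le_add_shift[of 5 xs 7]
    by (auto simp: admissible_seq_of_def sorted_wrt_append)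
  moreover have "hd (admissible_seq_of d xs) \<ge> 7"
    using assms by (cases "xs = []") (auto simp: admissible_seq_of_def hd_append upt_conv_Cons)
  ultimately show ?thesis
    using bound_iff by (auto simp: admissible_seqs_iff admissible_seq_of_def separated_lists_def)
qed

lemma admissible_seq_of_inverse:
  assumes hs: "hs \<in> admissible_seqs d"
  shows "admissible_seq_of d (separated_list_of hs) = hs"
proof -
  have ne: "hs \<noteq> []" and sorted: "sorted_wrt (\<lambda>x y. x + 6 \<le> y) hs"
    and first: "hs!0 \<ge> 7" and last: "hs!(length hs - 1) = d + length hs + 1"
    using hs by (auto simp: admissible_seqs_iff hd_conv_nth last_conv_nth)
  have lower: "hs!i \<ge> i + 7" if "i < length hs" for i
    using sorted_wrt_le_add_nth[OF sorted, of 0 i] first that by simp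
  show ?thesis
  proof (rule nth_equalityI)
    fix i assume "i < length (admissible_seq_of d (separated_list_of hs))"
    then have i: "i < length hs"
      using ne by (simp add: admissible_seq_of_def separated_list_of_def)
    then consider "i < length hs - 1" | "i = length hs - 1"
      by fastforce
    then show "admissible_seq_of d (separated_list_of hs) ! i = hs!i"
      using lower[OF i] last ne
      by cases (auto simp: admissible_seq_of_def separated_list_of_def nth_append)
  qed (use ne in \<open>simp add: admissible_seq_of_def separated_list_of_def\<close>)
qed

lemma inj_admissible_seq_of: "inj (admissible_seq_of d)"
proof (rule injI)
  fix xs ys assume eq: "admissible_seq_of d xs = admissible_seq_of d ys"
  then have "length xs = length ys"
    using arg_cong[OF eq, of length] by (simp add: admissible_seq_of_def)
  moreover have "xs!i = ys!i" if "i < length xs" for i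
    using arg_cong[OF eq, of "\<lambda>hs. hs!i"] that \<open>length xs = length ys\<close>
    by (simp add: admissible_seq_of_def nth_append)
  ultimately show "xs = ys" by (rule nth_equalityI)
qed

lemma card_admissible_seqs:
  assumes "d \<ge> 9"
  shows "card (admissible_seqs d) = card (separated_lists (d - 9))"
proof -
  have "admissible_seqs d = admissible_seq_of d ` separated_lists (d - 9)"
  proof (intro equalityI subsetI)
    fix hs assume hs: "hs \<in> admissible_seqs d"
    have "hs = admissible_seq_of d (separated_list_of hs)"
      using admissible_seq_of_inverse[OF hs] by simp
    moreover have "separated_list_of hs \<in> separated_lists (d - 9)"
      using admissible_seq_of_mem_iff[OF assms, of "separated_list_of hs"] hs calculation by simp
    ultimately show "hs \<in> admissible_seq_of d ` separated_lists (d - 9)" by blast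
  qed (use admissible_seq_of_mem_iff[OF assms] in blast)
  then show ?thesis
    by (simp add: card_image inj_on_subset[OF inj_admissible_seq_of])
qed

definition alpha_seqs :: "nat \<Rightarrow> nat list set" where
  "alpha_seqs n = {s :: nat list. length s = n \<and> s ! 0 = 1 \<and>
     (\<forall>i. Suc i < n \<longrightarrow> s ! Suc i - s ! i \<in> {1, 2}) \<and>
     (\<forall>i j. i < j \<and> Suc j < n \<and> s ! Suc i - s ! i = 2 \<and> s ! Suc j - s ! j = 2
        \<longrightarrow> s ! j - s ! i \<ge> 6)}"

lemma alpha_eq_card_alpha_seqs: "alpha n = card (alpha_seqs n)"
  unfolding alpha_def alpha_seqs_def ..

definition seq_of_double_steps :: "nat \<Rightarrow> nat list \<Rightarrow> nat list" where
  "seq_of_double_steps n xs = map (\<lambda>i. 1 + i + card {x \<in> set xs. x < i}) [0..<n]"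

definition double_steps :: "nat list \<Rightarrow> nat list" where
  "double_steps s = filter (\<lambda>i. s ! Suc i - s ! i = 2) [0..<length s - 1]"

lemma seq_of_double_steps_diff:
  assumes "i \<le> j" "j < n"
  shows "seq_of_double_steps n xs ! j
    = seq_of_double_steps n xs ! i + (j - i) + card {x \<in> set xs. i \<le> x \<and> x < j}"
  using card_less_split[of "set xs" i j] assms by (simp add: seq_of_double_steps_def)

lemma seq_of_double_steps_step:
  assumes "Suc i < n"
  shows "seq_of_double_steps n xs ! Suc i - seq_of_double_steps n xs ! i
    = (if i \<in> set xs then 2 else 1)"
  using card_less_Suc[of "set xs" i] assms by (simp add: seq_of_double_steps_def)

lemma seq_of_double_steps_mem_iff:
  assumes n: "n \<ge> 1" and strict: "sorted_wrt (<) xs" and range: "set xs \<subseteq> {..<n - 1}"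
  shows "seq_of_double_steps n xs \<in> alpha_seqs n \<longleftrightarrow> sorted_wrt (\<lambda>x y. x + 5 \<le> y) xs"
proof -
  let ?s = "seq_of_double_steps n xs"
  let ?between = "\<lambda>i j. card {x \<in> set xs. i \<le> x \<and> x < j}"
  have double: "?s!Suc i - ?s!i = 2 \<longleftrightarrow> i \<in> set xs" if "Suc i < n" for i
    using seq_of_double_steps_step[OF that] by simp
  have "?s \<in> alpha_seqs n \<longleftrightarrow>
      (\<forall>i\<in>set xs. \<forall>j\<in>set xs. i < j \<longrightarrow> j - i + ?between i j \<ge> 6)"
  proof -
    have "length ?s = n" "?s!0 = 1" "\<forall>i. Suc i < n \<longrightarrow> ?s!Suc i - ?s!i \<in> {1, 2}"
      using n seq_of_double_steps_step by (auto simp: seq_of_double_steps_def)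
    moreover have "?s!j - ?s!i = j - i + ?between i j" if "i < j" "j < n" for i j
      using seq_of_double_steps_diff[of i j n xs] that by simp
    ultimately show ?thesis
      using double range unfolding alpha_seqs_def
      by (auto 0 4 dest: Suc_lessD)
  qed
  also have "\<dots> \<longleftrightarrow> sorted_wrt (\<lambda>x y. x + 5 \<le> y) xs"
  proof
    assume sep: "\<forall>i\<in>set xs. \<forall>j\<in>set xs. i < j \<longrightarrow> j - i + ?between i j \<ge> 6"
    show "sorted_wrt (\<lambda>x y. x + 5 \<le> y) xs"
      unfolding sorted_wrt_iff_nth_Suc_transp[OF transp_le_add]
    proof (intro allI impI)
      fix p assume p: "Suc p < length xs"
      have "?between (xs!p) (xs!Suc p) = 1"
        using sorted_wrt_less_consecutive[OF strict p] by simp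
      moreover have "xs!p \<in> set xs" "xs!Suc p \<in> set xs" "xs!p < xs!Suc p"
        using p strict by (auto simp: sorted_wrt_nth_less)
      ultimately show "xs!p + 5 \<le> xs!Suc p"
        using sep by fastforce
    qed
  next
    assume sorted: "sorted_wrt (\<lambda>x y. x + 5 \<le> y) xs"
    show "\<forall>i\<in>set xs. \<forall>j\<in>set xs. i < j \<longrightarrow> j - i + ?between i j \<ge> 6"
    proof (intro ballI impI)
      fix i j assume ij: "i \<in> set xs" "j \<in> set xs" "i < j"
      then obtain p q where "p < length xs" "q < length xs" "i = xs!p" "j = xs!q"
        by (auto simp: in_set_conv_nth)
      then have "i + 5 \<le> j"
        using ij(3) sorted_wrt_less_nth_less_iff[OF strict] sorted_wrt_nth_less[OF sorted] by auto
      moreover have "?between i j \<ge> 1"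
        using ij by (auto simp: Suc_le_eq card_gt_0_iff)
      ultimately show "j - i + ?between i j \<ge> 6" by linarith
    qed
  qed
  finally show ?thesis .
qed

lemma double_steps_sorted_wrt: "sorted_wrt (<) (double_steps s)"
  unfolding double_steps_def by (rule sorted_wrt_filter) simp

lemma set_double_steps: "set (double_steps s) = {i. i < length s - 1 \<and> s ! Suc i - s ! i = 2}"
  by (auto simp: double_steps_def)

lemma seq_of_double_steps_inverse:
  assumes s: "s \<in> alpha_seqs n"
  shows "seq_of_double_steps n (double_steps s) = s"
proof -
  let ?X = "set (double_steps s)"
  have len: "length s = n"
    using s by (simp add: alpha_seqs_def)
  have "s!i = 1 + i + card {x \<in> ?X. x < i}" if "i < n" for i
    using that
  proof (induction i)
    case 0
    then show ?case using s by (simp add: alpha_seqs_def)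
  next
    case (Suc i)
    have "s!Suc i - s!i \<in> {1, 2}"
      using s Suc.prems by (simp add: alpha_seqs_def)
    moreover have "i \<in> ?X \<longleftrightarrow> s!Suc i - s!i = 2"
      using Suc.prems len by (auto simp: set_double_steps)
    ultimately show ?case
      using Suc card_less_Suc[of ?X i] by auto
  qed
  then show ?thesis
    using len by (auto simp: seq_of_double_steps_def intro: nth_equalityI)
qed

lemma inj_on_seq_of_double_steps:
  "inj_on (seq_of_double_steps n) {xs. sorted_wrt (<) xs \<and> set xs \<subseteq> {..<n - 1}}"
proof (rule inj_onI)
  fix xs ys
  assume xs: "xs \<in> {xs. sorted_wrt (<) xs \<and> set xs \<subseteq> {..<n - 1}}"
    and ys: "ys \<in> {xs. sorted_wrt (<) xs \<and> set xs \<subseteq> {..<n - 1}}"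
    and eq: "seq_of_double_steps n xs = seq_of_double_steps n ys"
  have "i \<in> set xs \<longleftrightarrow> i \<in> set ys" if "i < n - 1" for i
  proof -
    from that have "Suc i < n" by simp
    then have "(if i \<in> set xs then 2 else 1 :: nat) = (if i \<in> set ys then 2 else 1)"
      using seq_of_double_steps_step[of i n] eq by metis
    then show ?thesis
      by (auto split: if_splits)
  qed
  moreover have "set xs \<subseteq> {..<n - 1}" "set ys \<subseteq> {..<n - 1}"
    using xs ys by simp_all
  ultimately have "set xs = set ys"
    by blast
  then show "xs = ys"
    using xs ys by (simp add: strict_sorted_equal)
qed

lemma card_alpha_seqs:
  assumes "n \<ge> 1"
  shows "card (alpha_seqs n) = card (separated_lists (n - 1))"
proof -
  have strict: "sorted_wrt (<) xs" if "xs \<in> separated_lists m" for xs m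
    using that by (auto simp: separated_lists_def elim: sorted_wrt_mono_rel[rotated])
  have "alpha_seqs n = seq_of_double_steps n ` separated_lists (n - 1)"
  proof (intro equalityI subsetI)
    fix s assume s: "s \<in> alpha_seqs n"
    have range: "set (double_steps s) \<subseteq> {..<n - 1}"
      using s by (auto simp: set_double_steps alpha_seqs_def)
    have "seq_of_double_steps n (double_steps s) \<in> alpha_seqs n"
      using seq_of_double_steps_inverse[OF s] s by simp
    then have "double_steps s \<in> separated_lists (n - 1)"
      using seq_of_double_steps_mem_iff[OF assms double_steps_sorted_wrt range] range
      by (simp add: separated_lists_def)
    then show "s \<in> seq_of_double_steps n ` separated_lists (n - 1)"
      using seq_of_double_steps_inverse[OF s] by (metis image_eqI)
  next
    fix s assume "s \<in> seq_of_double_steps n ` separated_lists (n - 1)"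
    then show "s \<in> alpha_seqs n"
      using seq_of_double_steps_mem_iff[OF assms] strict by (auto simp: separated_lists_def)
  qed
  moreover have "inj_on (seq_of_double_steps n) (separated_lists (n - 1))"
    by (rule inj_on_subset[OF inj_on_seq_of_double_steps]) (auto simp: strict separated_lists_def)
  ultimately show ?thesis
    by (simp add: card_image)
qed

theorem proposition7p1:
  fixes d :: nat
  assumes "d \<ge> 46"
  shows "card (admissible_seqs d) = alpha (d - 8)"
proof -
  have "card (admissible_seqs d) = card (separated_lists (d - 9))"
    using assms by (intro card_admissible_seqs) simp
  also have "\<dots> = card (alpha_seqs (d - 8))"
    using card_alpha_seqs[of "d - 8"] assms by simp
  finally show ?thesis
    by (simp add: alpha_eq_card_alpha_seqs)
qed

end
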